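(* For every sufficiently large prime $N$ and every $\mu$ with $N^{-1/2}\log^2N\le\mu<1$, there is a set $T$ of residues modulo $N$ such that $|f_T|\le\mu$ and $$|T|=O\left(\frac{L_1^2}{\mu^2}\cdot\frac{1+\log(1/\mu)}{L_2+\log(1/\mu)}\right),$$ with an absolute implied constant.
   Context: $L_1=\log N$, $L_2=\log\log N$. For a set $T$ of residues modulo $N$, $f_T(k)=\sum_{t\in T}e^{2\pi ikt/N}$ and $|f_T|=\frac1{|T|}\max_{1\le k\le N-1}|f_T(k)|$. *)

theory Defs
  imports "HOL-Analysis.Analysis"
begin

definition expsum :: "nat \<Rightarrow> nat set \<Rightarrow> nat \<Rightarrow> complex" where
  "expsum N T k = (\<Sum>t\<in>T. cis (2 * pi * real k * real t / real N))"

definition coh :: "nat \<Rightarrow> nat set \<Rightarrow> real" where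
  "coh N T = (1 / real (card T)) * Max ((\<lambda>k. cmod (expsum N T k)) ` {1..N-1})"

end

theory Submission
  imports Defs
begin

text \<open>Choose each residue independently with probability \<open>p = M / N\<close>, where
  \<open>M \<asymp> log N / \<mu>\<^sup>2\<close>. By Chernoff bounds, \<open>|T|\<close> stays within \<open>M / 2\<close> of \<open>M\<close>, and
  each of the sums \<open>Re (\<i>\<^sup>j f\<^sub>T(k))\<close> (\<open>j < 4\<close>, \<open>0 < k < N\<close>), which have mean zero because
  \<open>\<Sum>\<^sub>t\<^sub><\<^sub>N e(kt/N) = 0\<close>, stays below \<open>\<mu>M/4\<close> except with probability \<open>exp (-\<mu>\<^sup>2 M / 64)\<close>.
  A union bound over these \<open>4N - 2\<close> events leaves a set with \<open>|f\<^sub>T| \<le> \<mu>\<close> and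
  \<open>|T| = O(L\<^sub>1 / \<mu>\<^sup>2)\<close>, which is within the claimed bound because
  \<open>L\<^sub>1 \<le> L\<^sub>1\<^sup>2 (1 + log (1/\<mu>)) / (L\<^sub>2 + log (1/\<mu>))\<close>.\<close>

lemma sum_cis_multiples_eq_0:
  fixes N k :: nat
  assumes "\<not> N dvd k"
  shows "(\<Sum>t<N. cis (2 * pi * real k * real t / real N)) = 0"
proof (cases "N = 0")
  case False
  define \<omega> where "\<omega> = cis (2 * pi * real k / real N)"
  have "\<omega> \<noteq> 1"
  proof
    assume "\<omega> = 1"
    then obtain m :: int where "2 * pi * real k / real N = of_int m * 2 * pi"
      by (auto simp: \<omega>_def complex_eq_iff cos_one_2pi_int)
    with False have "of_int (int k) = (of_int (int N * m) :: real)"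
      by (simp add: field_simps)
    hence "int N dvd int k" unfolding of_int_eq_iff by simp
    with assms show False by simp
  qed
  have "(\<Sum>t<N. cis (2 * pi * real k * real t / real N)) = (\<Sum>t<N. \<omega> ^ t)"
    unfolding \<omega>_def Complex.DeMoivre by (intro sum.cong refl arg_cong[where f = cis]) (simp add: field_simps)
  also have "\<dots> = (\<omega> ^ N - 1) / (\<omega> - 1)"
    using \<open>\<omega> \<noteq> 1\<close> by (rule geometric_sum)
  also have "\<omega> ^ N = 1"
    using False by (simp add: \<omega>_def Complex.DeMoivre)
  finally show ?thesis by simp
qed simp

lemma exp_bound_abs:
  fixes u :: real
  assumes "\<bar>u\<bar> \<le> 1"
  shows "exp u \<le> 1 + u + u\<^sup>2"
proof (cases "0 \<le> u")
  case True
  with assms show ?thesis by (intro exp_bound) auto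
next
  case False
  have "u * (u * u) \<le> 0" using False by (intro mult_nonpos_nonneg) auto
  hence "1 \<le> (1 - u) * (1 + u + u\<^sup>2)"
    by (simp add: algebra_simps power2_eq_square)
  moreover have "1 - u \<le> exp (- u)" using exp_ge_add_one_self[of "- u"] by simp
  moreover have "0 \<le> 1 + u + u\<^sup>2" using assms by simp
  ultimately have "1 \<le> exp (- u) * (1 + u + u\<^sup>2)"
    using mult_right_mono[of "1 - u" "exp (- u)" "1 + u + u\<^sup>2"] by linarith
  thus ?thesis by (simp add: exp_minus field_simps)
qed

text \<open>The probability of drawing \<open>T\<close> when every element of \<open>A\<close> is kept independently
  with probability \<open>p\<close>; the probabilistic argument is carried out with finite sums.\<close>

definition bernoulli_weight :: "real \<Rightarrow> 'a set \<Rightarrow> 'a set \<Rightarrow> real" where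
  "bernoulli_weight p A T = p ^ card T * (1 - p) ^ card (A - T)"

lemma bernoulli_weight_nonneg: "0 \<le> p \<Longrightarrow> p \<le> 1 \<Longrightarrow> 0 \<le> bernoulli_weight p A T"
  by (simp add: bernoulli_weight_def)

lemma bernoulli_weight_eq_prod:
  "bernoulli_weight p A T = (\<Prod>t\<in>T. p) * (\<Prod>t\<in>A - T. 1 - p)"
  by (simp add: bernoulli_weight_def)

lemma sum_bernoulli_weight: "finite A \<Longrightarrow> (\<Sum>T\<in>Pow A. bernoulli_weight p A T) = 1"
  using prod_add[of A "\<lambda>_. p" "\<lambda>_. 1 - p"] by (simp add: bernoulli_weight_def)

lemma bernoulli_exp_moment_le:
  assumes A: "finite A" and p: "0 \<le> p" "p \<le> 1" and c: "\<And>t. t \<in> A \<Longrightarrow> \<bar>c t\<bar> \<le> 1"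
    and l: "\<bar>l\<bar> \<le> 1"
  shows "(\<Sum>T\<in>Pow A. bernoulli_weight p A T * exp (l * (\<Sum>t\<in>T. c t)))
           \<le> exp (l * p * (\<Sum>t\<in>A. c t) + p * l\<^sup>2 * card A)"
proof -
  have factor_le: "p * exp (l * c t) + (1 - p) \<le> exp (l * p * c t + p * l\<^sup>2)" if t: "t \<in> A" for t
  proof -
    have "\<bar>l * c t\<bar> \<le> 1" using c[OF t] l by (simp add: abs_mult mult_le_one)
    hence "exp (l * c t) \<le> 1 + l * c t + (l * c t)\<^sup>2" by (rule exp_bound_abs)
    moreover have "(l * c t)\<^sup>2 \<le> l\<^sup>2"
      using c[OF t] by (simp add: power_mult_distrib abs_square_le_1 mult_left_le)
    ultimately have "exp (l * c t) \<le> 1 + l * c t + l\<^sup>2" by linarith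
    hence "p * exp (l * c t) + (1 - p) \<le> 1 + (l * p * c t + p * l\<^sup>2)"
      using p mult_left_mono[of "exp (l * c t)" "1 + l * c t + l\<^sup>2" p] by (simp add: algebra_simps)
    also have "\<dots> \<le> exp (l * p * c t + p * l\<^sup>2)" by (rule exp_ge_add_one_self)
    finally show ?thesis .
  qed
  have "(\<Sum>T\<in>Pow A. bernoulli_weight p A T * exp (l * (\<Sum>t\<in>T. c t)))
      = (\<Sum>T\<in>Pow A. (\<Prod>t\<in>T. p * exp (l * c t)) * (\<Prod>t\<in>A - T. 1 - p))"
    using A by (intro sum.cong refl)
      (auto simp: bernoulli_weight_eq_prod prod.distrib sum_distrib_left exp_sum finite_subset)
  also have "\<dots> = (\<Prod>t\<in>A. p * exp (l * c t) + (1 - p))"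
    using prod_add[OF A, of "\<lambda>t. p * exp (l * c t)" "\<lambda>_. 1 - p"] by simp
  also have "\<dots> \<le> (\<Prod>t\<in>A. exp (l * p * c t + p * l\<^sup>2))"
    using p by (intro prod_mono conjI factor_le) auto
  also have "\<dots> = exp (l * p * (\<Sum>t\<in>A. c t) + p * l\<^sup>2 * card A)"
    using A by (simp add: exp_sum[symmetric] sum.distrib sum_distrib_left)
  finally show ?thesis .
qed

lemma bernoulli_upper_tail_le:
  assumes A: "finite A" and p: "0 \<le> p" "p \<le> 1" and c: "\<And>t. t \<in> A \<Longrightarrow> \<bar>c t\<bar> \<le> 1"
    and l: "0 \<le> l" "l \<le> 1"
  shows "(\<Sum>T\<in>{T\<in>Pow A. p * (\<Sum>t\<in>A. c t) + s \<le> (\<Sum>t\<in>T. c t)}. bernoulli_weight p A T)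
           \<le> exp (p * l\<^sup>2 * card A - l * s)"
    (is "(\<Sum>T\<in>?tail. _) \<le> _")
proof -
  define shift where "shift = exp (- l * p * (\<Sum>t\<in>A. c t) - l * s)"
  have "(\<Sum>T\<in>?tail. bernoulli_weight p A T)
      \<le> (\<Sum>T\<in>?tail. bernoulli_weight p A T * exp (l * (\<Sum>t\<in>T. c t)) * shift)"
  proof (intro sum_mono)
    fix T assume "T \<in> ?tail"
    hence "0 \<le> l * ((\<Sum>t\<in>T. c t) - p * (\<Sum>t\<in>A. c t) - s)" using l by simp
    hence "1 \<le> exp (l * (\<Sum>t\<in>T. c t)) * shift"
      by (simp add: shift_def exp_add[symmetric] algebra_simps)
    thus "bernoulli_weight p A T \<le> bernoulli_weight p A T * exp (l * (\<Sum>t\<in>T. c t)) * shift"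
      using bernoulli_weight_nonneg[OF p] mult_left_mono by (fastforce simp: mult.assoc)
  qed
  also have "\<dots> \<le> (\<Sum>T\<in>Pow A. bernoulli_weight p A T * exp (l * (\<Sum>t\<in>T. c t)) * shift)"
    using A p by (intro sum_mono2) (auto simp: shift_def bernoulli_weight_nonneg)
  also have "\<dots> \<le> exp (l * p * (\<Sum>t\<in>A. c t) + p * l\<^sup>2 * card A) * shift"
    unfolding sum_distrib_right[symmetric] using l
    by (intro mult_right_mono bernoulli_exp_moment_le[OF A p c]) (auto simp: shift_def)
  also have "\<dots> = exp (p * l\<^sup>2 * card A - l * s)"
    by (simp add: shift_def exp_add[symmetric])
  finally show ?thesis .
qed

lemma exists_subset_avoiding_events:
  fixes E :: real
  assumes A: "finite A" and p: "0 \<le> p" "p \<le> 1" and I: "finite I"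
    and tail: "\<And>i. i \<in> I \<Longrightarrow> (\<Sum>T\<in>{T\<in>Pow A. P i T}. bernoulli_weight p A T) \<le> E"
    and small: "real (card I) * E < 1"
  shows "\<exists>T\<subseteq>A. \<forall>i\<in>I. \<not> P i T"
proof (rule ccontr)
  assume "\<not> ?thesis"
  hence covered: "\<exists>i\<in>I. P i T" if "T \<in> Pow A" for T using that by auto
  have w: "0 \<le> bernoulli_weight p A T" for T using bernoulli_weight_nonneg[OF p] .
  have "1 = (\<Sum>T\<in>Pow A. bernoulli_weight p A T)" using sum_bernoulli_weight[OF A] by simp
  also have "\<dots> \<le> (\<Sum>T\<in>Pow A. \<Sum>i\<in>I. if P i T then bernoulli_weight p A T else 0)"
  proof (intro sum_mono)
    fix T assume "T \<in> Pow A"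
    then obtain i where "i \<in> I" "P i T" using covered by blast
    thus "bernoulli_weight p A T \<le> (\<Sum>i\<in>I. if P i T then bernoulli_weight p A T else 0)"
      using member_le_sum[OF \<open>i \<in> I\<close>, of "\<lambda>i. if P i T then bernoulli_weight p A T else 0"] I w
      by auto
  qed
  also have "\<dots> = (\<Sum>i\<in>I. \<Sum>T\<in>{T\<in>Pow A. P i T}. bernoulli_weight p A T)"
    using A by (subst sum.swap) (intro sum.cong refl sum.inter_filter[symmetric], simp)
  also have "\<dots> \<le> real (card I) * E" using sum_mono[of I _ "\<lambda>_. E"] tail by fastforce
  finally show False using small by simp
qed

lemma exists_subset_sums_below_mean:
  fixes F :: "(('a \<Rightarrow> real) \<times> real) set" and \<gamma> :: real
  assumes A: "finite A" and p: "0 \<le> p" "p \<le> 1" and F: "finite F"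
    and bounded: "\<And>c r. (c, r) \<in> F \<Longrightarrow> \<forall>t\<in>A. \<bar>c t\<bar> \<le> 1"
    and exponent: "\<And>c r. (c, r) \<in> F \<Longrightarrow> \<exists>l. 0 \<le> l \<and> l \<le> 1 \<and> p * l\<^sup>2 * real (card A) - l * r \<le> - \<gamma>"
    and small: "real (card F) * exp (- \<gamma>) < 1"
  shows "\<exists>T\<subseteq>A. \<forall>(c, r)\<in>F. (\<Sum>t\<in>T. c t) < p * (\<Sum>t\<in>A. c t) + r"
proof -
  define exceeds where "exceeds i T \<longleftrightarrow> p * (\<Sum>t\<in>A. fst i t) + snd i \<le> (\<Sum>t\<in>T. fst i t)"
    for i :: "('a \<Rightarrow> real) \<times> real" and T
  have "(\<Sum>T\<in>{T\<in>Pow A. exceeds i T}. bernoulli_weight p A T) \<le> exp (- \<gamma>)" if "i \<in> F" for i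
  proof -
    obtain c r where i: "i = (c, r)" by fastforce
    then obtain l where l: "0 \<le> l" "l \<le> 1" "p * l\<^sup>2 * real (card A) - l * r \<le> - \<gamma>"
      using exponent \<open>i \<in> F\<close> by blast
    have "(\<Sum>T\<in>{T\<in>Pow A. exceeds i T}. bernoulli_weight p A T) \<le> exp (p * l\<^sup>2 * card A - l * r)"
      unfolding exceeds_def i fst_conv snd_conv
      using bounded \<open>i \<in> F\<close> i by (intro bernoulli_upper_tail_le A p l(1,2)) auto
    also have "\<dots> \<le> exp (- \<gamma>)" using l(3) by simp
    finally show ?thesis .
  qed
  then obtain T where "T \<subseteq> A" "\<forall>i\<in>F. \<not> exceeds i T"
    using exists_subset_avoiding_events[OF A p F _ small, of exceeds] by blast
  thus ?thesis by (auto simp: exceeds_def not_le case_prod_beta)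
qed

definition wave_component :: "nat \<Rightarrow> nat \<Rightarrow> nat \<Rightarrow> nat \<Rightarrow> real" where
  "wave_component N k j t = Re (\<i> ^ j * cis (2 * pi * real k * real t / real N))"

lemma abs_wave_component_le: "\<bar>wave_component N k j t\<bar> \<le> 1"
  using abs_Re_le_cmod[of "\<i> ^ j * cis (2 * pi * real k * real t / real N)"]
  by (simp add: wave_component_def norm_mult norm_power)

lemma sum_wave_component: "(\<Sum>t\<in>T. wave_component N k j t) = Re (\<i> ^ j * expsum N T k)"
  by (simp add: wave_component_def expsum_def sum_distrib_left)

lemma sum_wave_component_lessThan:
  "\<not> N dvd k \<Longrightarrow> (\<Sum>t<N. wave_component N k j t) = 0"
  by (simp add: sum_wave_component expsum_def sum_cis_multiples_eq_0)

lemma cmod_le_of_Re_rotations_less: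
  assumes "\<And>j. j < 4 \<Longrightarrow> Re (\<i> ^ j * z) < s"
  shows "cmod z \<le> 2 * s"
proof -
  have "\<bar>Re z\<bar> < s" using assms[of 0] assms[of 2] by (simp add: power2_eq_square)
  moreover have "\<bar>Im z\<bar> < s" using assms[of 1] assms[of 3] by (simp add: power3_eq_cube)
  ultimately show ?thesis using cmod_le[of z] by linarith
qed

lemma coh_le_of_wave_bounds:
  fixes \<mu> s :: real
  assumes N: "2 \<le> N" and T: "0 < card T"
    and wave: "\<And>k j. k \<in> {1..N-1} \<Longrightarrow> j < 4 \<Longrightarrow> (\<Sum>t\<in>T. wave_component N k j t) < s"
    and s: "2 * s \<le> \<mu> * card T"
  shows "coh N T \<le> \<mu>"
proof -
  have "cmod (expsum N T k) \<le> \<mu> * card T" if "k \<in> {1..N-1}" for k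
    using cmod_le_of_Re_rotations_less[of "expsum N T k" s] wave[OF that] s
    by (simp add: sum_wave_component)
  hence "Max ((\<lambda>k. cmod (expsum N T k)) ` {1..N-1}) \<le> \<mu> * card T"
    using N by (subst Max_le_iff) auto
  thus ?thesis using T by (simp add: coh_def field_simps)
qed

lemma exists_subset_card_waves_below:
  fixes N :: nat and \<mu> M :: real
  assumes N: "2 \<le> N" and \<mu>: "0 < \<mu>" "\<mu> \<le> 1" and M: "0 < M" "M \<le> N"
    and small: "4 * N * exp (- (\<mu>\<^sup>2 * M / 64)) < 1"
  shows "\<exists>T\<subseteq>{..<N}. M / 2 < card T \<and> card T < 3 * M / 2 \<and>
           (\<forall>k\<in>{1..N-1}. \<forall>j<4. (\<Sum>t\<in>T. wave_component N k j t) < \<mu> * M / 4)"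
proof -
  define p where "p = M / N"
  define sizes where "sizes = {(\<lambda>_::nat. 1 :: real, M / 2), (\<lambda>_. -1, M / 2)}"
  define waves where "waves = (\<lambda>(k, j). (wave_component N k j, \<mu> * M / 4)) ` ({1..N-1} \<times> {..<4})"
  have p: "0 \<le> p" "p \<le> 1" "p * N = M" using M N by (auto simp: p_def field_simps)
  have exponent: "\<exists>l. 0 \<le> l \<and> l \<le> 1 \<and> p * l\<^sup>2 * card {..<N} - l * r \<le> - (\<mu>\<^sup>2 * M / 64)"
    if "(c, r) \<in> sizes \<union> waves" for c r
  proof (cases "(c, r) \<in> sizes")
    case True
    have "p * (1/4)\<^sup>2 * card {..<N} - 1/4 * r = - (M / 16)"
      using True p(3) by (auto simp: sizes_def power2_eq_square)
    moreover have "\<mu>\<^sup>2 * M \<le> 1 * M" using \<mu> M by (intro mult_right_mono) (auto simp: power_le_one)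
    ultimately have "p * (1/4)\<^sup>2 * card {..<N} - 1/4 * r \<le> - (\<mu>\<^sup>2 * M / 64)"
      using M by linarith
    thus ?thesis by (intro exI[of _ "1/4"]) auto
  next
    case False
    hence "p * (\<mu>/8)\<^sup>2 * card {..<N} - \<mu>/8 * r = - (\<mu>\<^sup>2 * M / 64)"
      using that p by (auto simp: waves_def power2_eq_square field_simps)
    thus ?thesis using \<mu> by (intro exI[of _ "\<mu>/8"]) auto
  qed
  have "card waves \<le> 4 * (N - 1)"
    unfolding waves_def using card_image_le[of "{1..N-1} \<times> {..<4::nat}"]
    by (simp add: card_cartesian_product mult.commute)
  moreover have "card sizes \<le> 2" by (simp add: sizes_def card_insert_if)
  ultimately have "card (sizes \<union> waves) \<le> 4 * N" using card_Un_le[of sizes waves] N by linarith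
  hence "real (card (sizes \<union> waves)) * exp (- (\<mu>\<^sup>2 * M / 64)) \<le> 4 * N * exp (- (\<mu>\<^sup>2 * M / 64))"
    by (intro mult_right_mono) auto
  hence union_small: "real (card (sizes \<union> waves)) * exp (- (\<mu>\<^sup>2 * M / 64)) < 1"
    using small by linarith
  have finite: "finite (sizes \<union> waves)" by (simp add: sizes_def waves_def)
  have bounded: "\<forall>t\<in>{..<N}. \<bar>c t\<bar> \<le> 1" if "(c, r) \<in> sizes \<union> waves" for c r
    using that abs_wave_component_le by (auto simp: sizes_def waves_def)
  have "\<exists>T\<subseteq>{..<N}. \<forall>(c, r)\<in>sizes \<union> waves. (\<Sum>t\<in>T. c t) < p * (\<Sum>t<N. c t) + r"
    by (rule exists_subset_sums_below_mean[OF finite_lessThan p(1,2) finite bounded exponent union_small])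
  then obtain T where T: "T \<subseteq> {..<N}"
    and below: "\<forall>(c, r)\<in>sizes \<union> waves. (\<Sum>t\<in>T. c t) < p * (\<Sum>t<N. c t) + r"
    by (elim exE conjE)
  have "(\<Sum>t\<in>T. wave_component N k j t) < \<mu> * M / 4" if "k \<in> {1..N-1}" "j < 4" for k j
  proof -
    have "(\<Sum>t<N. wave_component N k j t) = 0"
      using that by (intro sum_wave_component_lessThan) (auto dest: dvd_imp_le)
    thus ?thesis using below that by (force simp: waves_def)
  qed
  moreover have "M / 2 < card T" "card T < 3 * M / 2"
    using below p by (auto simp: sizes_def sum_negf)
  ultimately show ?thesis using T by blast
qed

lemma exists_subset_small_coh:
  fixes N :: nat and \<mu> M :: real
  assumes N: "2 \<le> N" and \<mu>: "0 < \<mu>" "\<mu> \<le> 1" and M: "0 < M" "M \<le> N"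
    and small: "4 * N * exp (- (\<mu>\<^sup>2 * M / 64)) < 1"
  shows "\<exists>T. T \<subseteq> {0..<N} \<and> T \<noteq> {} \<and> coh N T \<le> \<mu> \<and> card T \<le> 3 * M / 2"
proof -
  obtain T where T: "T \<subseteq> {..<N}" and card: "M / 2 < card T" "card T < 3 * M / 2"
    and waves: "\<forall>k\<in>{1..N-1}. \<forall>j<4. (\<Sum>t\<in>T. wave_component N k j t) < \<mu> * M / 4"
    using exists_subset_card_waves_below[OF assms] by blast
  have "2 * (\<mu> * M / 4) \<le> \<mu> * card T" using card \<mu> by simp
  hence "coh N T \<le> \<mu>" using N card M waves by (intro coh_le_of_wave_bounds[where s = "\<mu> * M / 4"]) auto
  moreover have "T \<noteq> {}" using card(1) M by auto
  ultimately show ?thesis using T card(2) by (intro exI[of _ T]) auto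
qed

lemma six_le_ln: "729 \<le> N \<Longrightarrow> 6 \<le> ln (real N)"
proof -
  assume N: "729 \<le> N"
  have "exp 6 = exp (1::real) ^ 6" using exp_of_nat_mult[of 6 "1::real"] by simp
  also have "\<dots> \<le> 3 ^ 6" using exp_le by (intro power_mono) auto
  also have "\<dots> \<le> real N" using N by simp
  finally show ?thesis using N by (subst ln_ge_iff) auto
qed

lemma le_sq_mult_ratio_ln:
  fixes L x :: real
  assumes "1 < L" "0 \<le> x"
  shows "L \<le> L\<^sup>2 * ((1 + x) / (ln L + x))"
proof -
  have "ln L \<le> L" using ln_le_minus_one[of L] assms by linarith
  moreover have "x \<le> L * x" using assms mult_right_mono[of 1 L x] by simp
  ultimately have "ln L + x \<le> L * (1 + x)" by (simp add: algebra_simps)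
  hence "L * (ln L + x) \<le> L\<^sup>2 * (1 + x)"
    using assms mult_left_mono[of "ln L + x" "L * (1 + x)" L] by (simp add: power2_eq_square mult.assoc)
  moreover have "0 < ln L + x" using assms ln_gt_zero[of L] by linarith
  ultimately show ?thesis by (simp add: field_simps)
qed

lemma sq_le_mult_sq_of_powr_bound:
  fixes x y \<mu> :: real
  assumes "0 < x" "0 \<le> y" "x powr (-1/2) * y \<le> \<mu>"
  shows "y\<^sup>2 \<le> x * \<mu>\<^sup>2"
proof -
  have "(x powr (-1/2) * y)\<^sup>2 \<le> \<mu>\<^sup>2" using assms by (intro power_mono) auto
  moreover have "(x powr (-1/2))\<^sup>2 = 1 / x"
    using assms by (simp add: power2_eq_square powr_add[symmetric] powr_minus_divide)
  hence "y\<^sup>2 = x * (x powr (-1/2) * y)\<^sup>2" using assms by (simp add: power_mult_distrib)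
  ultimately show ?thesis using assms by (simp add: mult_left_mono)
qed

lemma exists_subset_small_coh_log:
  fixes N :: nat and \<mu> :: real
  assumes N: "729 \<le> N" and \<mu>: "0 < \<mu>" "\<mu> \<le> 1" and dense: "(ln N)^4 \<le> N * \<mu>\<^sup>2"
  shows "\<exists>T. T \<subseteq> {0..<N} \<and> T \<noteq> {} \<and> coh N T \<le> \<mu> \<and> card T \<le> 288 * ln N / \<mu>\<^sup>2"
proof -
  define L where "L = ln (real N)"
  \<comment> \<open>chosen so that the union bound \<open>4N exp (-\<mu>\<^sup>2 M / 64)\<close> equals \<open>1/e\<close>\<close>
  define M where "M = 64 * (ln (4 * real N) + 1) / \<mu>\<^sup>2"
  have L: "6 \<le> L" using six_le_ln[OF N] by (simp add: L_def)
  have ln4N: "L \<le> ln (4 * real N)" "ln (4 * real N) \<le> L + 3"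
    unfolding L_def using N ln_le_minus_one[of 4] by (simp_all add: ln_mult)
  have "0 < ln (4 * real N) + 1" using L ln4N by linarith
  hence "0 < M" using \<mu> by (simp add: M_def)
  moreover have "M \<le> N"
  proof -
    have "6 ^ 3 \<le> L ^ 3" using L by (intro power_mono) auto
    hence "216 * L \<le> L ^ 3 * L" using L by (intro mult_right_mono) auto
    also have "\<dots> = L ^ 4" by (simp add: power_Suc2[symmetric] del: power_Suc2)
    finally have "64 * (ln (4 * real N) + 1) \<le> L ^ 4" using L ln4N by (simp add: algebra_simps)
    thus ?thesis using dense \<mu> by (simp add: M_def L_def field_simps)
  qed
  moreover have "4 * N * exp (- (\<mu>\<^sup>2 * M / 64)) < 1"
  proof -
    have "\<mu>\<^sup>2 * M / 64 = ln (4 * real N) + 1" using \<mu> by (simp add: M_def)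
    hence "exp (- (\<mu>\<^sup>2 * M / 64)) = exp (- ln (4 * real N) + - 1)"
      by (intro arg_cong[where f = exp]) linarith
    also have "\<dots> = exp (- ln (4 * real N)) * exp (- 1)" by (rule exp_add)
    also have "exp (- ln (4 * real N)) = 1 / (4 * N)" using N by (simp add: exp_minus inverse_eq_divide)
    finally have "4 * N * exp (- (\<mu>\<^sup>2 * M / 64)) = exp (-1)" using N by simp
    thus ?thesis by simp
  qed
  ultimately obtain T where T: "T \<subseteq> {0..<N}" "T \<noteq> {}" "coh N T \<le> \<mu>" "card T \<le> 3 * M / 2"
    using exists_subset_small_coh[of N \<mu> M] N \<mu> by auto
  have "3 * M / 2 = 96 * (ln (4 * real N) + 1) / \<mu>\<^sup>2" using \<mu> by (simp add: M_def field_simps)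
  also have "\<dots> \<le> 288 * L / \<mu>\<^sup>2"
    using L ln4N by (intro divide_right_mono) (auto simp: algebra_simps)
  finally have "card T \<le> 288 * ln N / \<mu>\<^sup>2" using T(4) unfolding L_def by linarith
  with T(1-3) show ?thesis by blast
qed

theorem corollary5:
  shows "\<exists>C>0. \<exists>N0::nat. \<forall>N::nat. \<forall>\<mu>::real.
    prime N \<and> N \<ge> N0 \<and> real N powr (-1/2) * (ln (real N))^2 \<le> \<mu> \<and> \<mu> < 1 \<longrightarrow>
    (\<exists>T. T \<subseteq> {0..<N} \<and> T \<noteq> {} \<and> coh N T \<le> \<mu> \<and>
       real (card T) \<le> C * ((ln (real N))^2 / \<mu>^2) *
         ((1 + ln (1/\<mu>)) / (ln (ln (real N)) + ln (1/\<mu>))))"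
proof (rule exI[of _ "288 :: real"], intro conjI exI[of _ "729 :: nat"] allI impI)
  fix N :: nat and \<mu> :: real
  assume "prime N \<and> 729 \<le> N \<and> real N powr (-1/2) * (ln (real N))^2 \<le> \<mu> \<and> \<mu> < 1"
  hence N: "729 \<le> N" and lower: "real N powr (-1/2) * (ln N)\<^sup>2 \<le> \<mu>" and "\<mu> < 1" by auto
  define L where "L = ln (real N)"
  have L: "6 \<le> L" using six_le_ln[OF N] by (simp add: L_def)
  have "0 < real N powr (-1/2) * L\<^sup>2" using N L by simp
  hence "0 < \<mu>" using lower by (simp add: L_def)
  have "(L\<^sup>2)\<^sup>2 \<le> N * \<mu>\<^sup>2" using sq_le_mult_sq_of_powr_bound[OF _ _ lower] N by (simp add: L_def)
  then obtain T where T: "T \<subseteq> {0..<N}" "T \<noteq> {}" "coh N T \<le> \<mu>" "card T \<le> 288 * L / \<mu>\<^sup>2"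
    using exists_subset_small_coh_log[OF N \<open>0 < \<mu>\<close>] \<open>\<mu> < 1\<close> by (auto simp: L_def)
  have "288 * L / \<mu>\<^sup>2 \<le> 288 * (L\<^sup>2 * ((1 + ln (1/\<mu>)) / (ln L + ln (1/\<mu>)))) / \<mu>\<^sup>2"
    using L \<open>0 < \<mu>\<close> \<open>\<mu> < 1\<close> by (intro divide_right_mono mult_left_mono le_sq_mult_ratio_ln) auto
  with T show "\<exists>T. T \<subseteq> {0..<N} \<and> T \<noteq> {} \<and> coh N T \<le> \<mu> \<and>
       real (card T) \<le> 288 * ((ln (real N))^2 / \<mu>^2) *
         ((1 + ln (1/\<mu>)) / (ln (ln (real N)) + ln (1/\<mu>)))"
    by (intro exI[of _ T]) (auto simp: L_def field_simps)
qed simp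

end
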